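(* Let $R$ be a ring and $G$ a group such that the group ring $RG$ is a DT ring, and suppose $2\notin\Delta(R)$ and $3\notin\Delta(R)$. Then $G$ is an elementary abelian $2$-group, i.e. $g^2=1$ for all $g\in G$.
   Context: All rings are associative with identity; $U(R)$ is the group of units. $\Delta(R)=\{x\in R: x+u\in U(R)\text{ for all }u\in U(R)\}$. $\mathrm{Tr}(R)=\{x\in R: x^3=x\}$. A ring $R$ is a DT ring if every $r\in R$ can be written $r=e+d$ with $e\in\mathrm{Tr}(R)$ and $d\in\Delta(R)$. $RG$ denotes the group ring. *)

theory Defs
  imports Main "HOL-Library.Poly_Mapping"
begin

text \<open>Group ring RG: finitely supported functions from G to R, i.e. the poly_mapping type
  with the convolution product of HOL-Library.Poly_Mapping, where the group G
  is written additively (class group_add, not necessarily commutative).\<close>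

definition is_unit :: "'a::ring_1 \<Rightarrow> bool" where
  "is_unit x \<longleftrightarrow> (\<exists>y. x * y = 1 \<and> y * x = 1)"

definition Delta :: "'a::ring_1 set" where
  "Delta = {x. \<forall>u. is_unit u \<longrightarrow> is_unit (x + u)}"

definition Tr :: "'a::ring_1 set" where
  "Tr = {x. x ^ 3 = x}"

definition DT_ring :: "'a::ring_1 itself \<Rightarrow> bool" where
  "DT_ring _ \<longleftrightarrow> (\<forall>r::'a. \<exists>e d. e \<in> Tr \<and> d \<in> Delta \<and> r = e + d)"

end

theory Submission
  imports Defs
begin

text \<open>Numerals are central in \<open>RG\<close>, and in a DT ring a central \<open>c\<close> with \<open>c\<^sup>2 - 1\<close> a unit lies
  in \<open>\<Delta>\<close>. As \<open>\<Delta>(RG) \<inter> R \<subseteq> \<Delta>(R)\<close>, neither \<open>2\<close> nor \<open>3\<close> is a unit of \<open>R\<close>, for otherwise \<open>3 = 2\<^sup>2 - 1\<close> or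
  \<open>8 = 3\<^sup>2 - 1\<close> would be a unit.
  For \<open>g \<in> G\<close> the square \<open>H\<close> of the unit \<open>g\<close> lies in \<open>1 + \<Delta>(RG)\<close>. If \<open>H\<close> has odd order,
  \<open>1 - H\<close> is divisible by \<open>2\<close>; if it has even order, some power \<open>K \<noteq> 1\<close> of \<open>H\<close> is an involution
  and \<open>1 - K\<close> is divisible by \<open>3\<close>. Comparing coefficients at the identity then makes \<open>2\<close> or \<open>3\<close>
  a unit. If \<open>H\<close> has infinite order, \<open>1 - H + H\<^sup>2 = 1 + H (H - 1)\<close> would be a unit, which
  a degree argument along the cyclic group generated by \<open>H\<close> rules out.\<close>

lemma is_unit_one: "is_unit (1::'a::ring_1)"
  unfolding is_unit_def by (rule exI[of _ 1]) simp

lemma is_unit_mult: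
  assumes "is_unit (a::'a::ring_1)" and "is_unit b"
  shows "is_unit (a * b)"
proof -
  obtain a' where a: "a * a' = 1" "a' * a = 1" using assms(1) unfolding is_unit_def by blast
  obtain b' where b: "b * b' = 1" "b' * b = 1" using assms(2) unfolding is_unit_def by blast
  have "a * b * (b' * a') = 1" by (simp add: mult.assoc[symmetric] a) (simp add: mult.assoc b a)
  moreover have "b' * a' * (a * b) = 1" by (simp add: mult.assoc[symmetric] b) (simp add: mult.assoc a b)
  ultimately show ?thesis unfolding is_unit_def by blast
qed

lemma is_unit_minus:
  assumes "is_unit (a::'a::ring_1)"
  shows "is_unit (- a)"
  using assms unfolding is_unit_def by (metis minus_mult_minus)

lemma is_unit_if_left_and_right_inverse:
  assumes "(a::'a::ring_1) * b = 1" and "c * a = 1"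
  shows "is_unit a"
proof -
  have "c = b" by (metis assms mult.assoc mult_1_left mult_1_right)
  then show ?thesis using assms unfolding is_unit_def by blast
qed

lemma is_unit_factor_if_products_unit:
  assumes "is_unit ((a::'a::ring_1) * b)" and "is_unit (b * a)"
  shows "is_unit a"
proof -
  obtain s where "a * b * s = 1" using assms(1) unfolding is_unit_def by blast
  moreover obtain t where "t * (b * a) = 1" using assms(2) unfolding is_unit_def by blast
  ultimately show ?thesis by (metis is_unit_if_left_and_right_inverse mult.assoc)
qed

lemma is_unit_if_power_eq_one:
  assumes "(x::'a::ring_1) ^ n = 1" and "0 < n"
  shows "is_unit x"
  using assms is_unit_if_left_and_right_inverse[of x "x ^ (n - 1)" "x ^ (n - 1)"]
  by (metis One_nat_def Suc_pred power_Suc power_Suc2)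

lemma numeral_mult_commute: "(numeral n :: 'a::ring_1) * y = y * numeral n"
  using mult_of_nat_commute[of "numeral n" y] by simp

lemma Delta_add_unit:
  assumes "d \<in> Delta" and "is_unit u"
  shows "is_unit (d + (u::'a::ring_1))"
  using assms unfolding Delta_def by blast

lemma Delta_zero: "(0::'a::ring_1) \<in> Delta"
  unfolding Delta_def by simp

lemma Delta_uminus:
  assumes "(d::'a::ring_1) \<in> Delta"
  shows "- d \<in> Delta"
  unfolding Delta_def
proof (intro CollectI allI impI)
  fix u :: 'a
  assume "is_unit u"
  then have "is_unit (- (d + - u))" using assms by (intro is_unit_minus Delta_add_unit)
  then show "is_unit (- d + u)" by simp
qed

lemma Delta_add:
  assumes "(a::'a::ring_1) \<in> Delta" and "b \<in> Delta"
  shows "a + b \<in> Delta"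
  unfolding Delta_def
proof (intro CollectI allI impI)
  fix u :: 'a
  assume "is_unit u"
  then have "is_unit (a + (b + u))" using assms by (intro Delta_add_unit)
  then show "is_unit (a + b + u)" by (simp add: add.assoc)
qed

lemma Delta_diff:
  assumes "(a::'a::ring_1) \<in> Delta" and "b \<in> Delta"
  shows "a - b \<in> Delta"
  using Delta_add[OF assms(1) Delta_uminus[OF assms(2)]] by simp

lemma Delta_unit_mult:
  assumes "is_unit (v::'a::ring_1)" and "d \<in> Delta"
  shows "v * d \<in> Delta"
  unfolding Delta_def
proof (intro CollectI allI impI)
  fix u :: 'a
  assume u: "is_unit u"
  obtain v' where v: "v * v' = 1" "v' * v = 1" using assms(1) unfolding is_unit_def by blast
  have "is_unit v'" using v unfolding is_unit_def by blast
  then have "is_unit (v * (d + v' * u))"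
    using assms u by (intro is_unit_mult Delta_add_unit)
  also have "v * (d + v' * u) = v * d + u"
    by (simp add: distrib_left mult.assoc[symmetric] v)
  finally show "is_unit (v * d + u)" .
qed

lemma Delta_mult_unit:
  assumes "is_unit (v::'a::ring_1)" and "d \<in> Delta"
  shows "d * v \<in> Delta"
  unfolding Delta_def
proof (intro CollectI allI impI)
  fix u :: 'a
  assume u: "is_unit u"
  obtain v' where v: "v * v' = 1" "v' * v = 1" using assms(1) unfolding is_unit_def by blast
  have "is_unit v'" using v unfolding is_unit_def by blast
  then have "is_unit ((d + u * v') * v)"
    using assms u by (intro is_unit_mult Delta_add_unit)
  also have "(d + u * v') * v = d * v + u"
    by (simp add: distrib_right mult.assoc v)
  finally show "is_unit (d * v + u)" .
qed

lemma Delta_power_minus_one: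
  assumes "is_unit (x::'a::ring_1)" and "x - 1 \<in> Delta"
  shows "x ^ n - 1 \<in> Delta"
proof (induction n)
  case 0
  then show ?case by (simp add: Delta_zero)
next
  case (Suc n)
  have "x ^ Suc n - 1 = x * (x ^ n - 1) + (x - 1)" by (simp add: algebra_simps)
  then show ?case using Delta_add[OF Delta_unit_mult[OF assms(1) Suc] assms(2)] by metis
qed

lemma sum_powers_mult_one_minus:
  "(\<Sum>i<n. (x::'a::ring_1) ^ i) * (1 - x) = 1 - x ^ n"
proof (induction n)
  case 0
  then show ?case by simp
next
  case (Suc n)
  have "(\<Sum>i<Suc n. x ^ i) * (1 - x) = (\<Sum>i<n. x ^ i) * (1 - x) + x ^ n * (1 - x)"
    by (simp add: distrib_right)
  also have "\<dots> = 1 - x ^ Suc n"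
    using Suc by (simp add: right_diff_distrib power_commutes)
  finally show ?case .
qed

lemma numeral_factor_if_annihilated_by_unit_plus_multiple:
  assumes "is_unit (w::'a::ring_1)" and "(w + numeral c * z) * a = 0"
  shows "\<exists>q. a = numeral c * q"
proof -
  obtain w' where w': "w' * w = 1" using assms(1) unfolding is_unit_def by blast
  have wa: "w * a = - (numeral c * z * a)"
    using assms(2) by (simp add: distrib_right eq_neg_iff_add_eq_0)
  have "a = w' * (w * a)" by (simp add: mult.assoc[symmetric] w')
  also have "\<dots> = - (w' * numeral c * (z * a))"
    unfolding wa by (simp add: mult.assoc)
  also have "\<dots> = numeral c * - (w' * z * a)"
    by (simp add: numeral_mult_commute[of c w', symmetric] mult.assoc)
  finally show ?thesis ..
qed

lemma DT_unit_decomp: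
  assumes "DT_ring TYPE('a::ring_1)" and "is_unit (u::'a)"
  obtains e d where "e * e = 1" and "d \<in> Delta" and "u = e + d"
proof -
  obtain e d where ed: "e \<in> Tr" "d \<in> Delta" "u = e + d"
    using assms(1) unfolding DT_ring_def by blast
  have "is_unit (- d + u)" using ed(2) assms(2) by (intro Delta_add_unit Delta_uminus)
  then obtain e' where e': "e' * e = 1" using ed(3) unfolding is_unit_def by auto
  have "e * e * e = e" using ed(1) unfolding Tr_def by (simp add: power3_eq_cube)
  then have "e * e = 1" by (metis e' mult.assoc mult_1_left)
  then show ?thesis using that ed by blast
qed

lemma DT_square_minus_one_Delta:
  assumes "DT_ring TYPE('a::ring_1)" and "is_unit (u::'a)"
  shows "u * u - 1 \<in> Delta"
proof -
  obtain e d where ed: "e * e = 1" "d \<in> Delta" "u = e + d"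
    using DT_unit_decomp[OF assms] .
  have "is_unit e" using ed(1) unfolding is_unit_def by blast
  then have "d * e + u * d \<in> Delta" using assms(2) ed(2) by (intro Delta_add Delta_mult_unit Delta_unit_mult)
  moreover have "u * u - 1 = d * e + u * d" by (simp add: ed(3) algebra_simps ed(1))
  ultimately show ?thesis by simp
qed

lemma DT_central_Delta:
  assumes "DT_ring TYPE('a::ring_1)" and "\<And>x. c * x = x * c" and "is_unit (c * c - 1)"
  shows "(c::'a) \<in> Delta"
  unfolding Delta_def
proof (intro CollectI allI impI)
  fix u :: 'a
  assume "is_unit u"
  then obtain e d where ed: "e * e = 1" "d \<in> Delta" "u = e + d"
    using DT_unit_decomp[OF assms(1)] by blast
  have "(c + e) * (c - e) = c * c - 1" "(c - e) * (c + e) = c * c - 1"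
    by (simp_all add: algebra_simps assms(2)[of e] ed(1))
  then have "is_unit (c + e)" using assms(3) by (metis is_unit_factor_if_products_unit)
  then have "is_unit (d + (c + e))" by (rule Delta_add_unit[OF ed(2)])
  then show "is_unit (c + u)" by (simp add: ed(3) algebra_simps)
qed

lemma one_minus_eq_two_mult_if_odd_order:
  assumes "(x::'a::ring_1) - 1 \<in> Delta" and "x ^ (2 * m + 1) = 1"
  shows "\<exists>q. 1 - x = 2 * q"
proof -
  have D: "x ^ i - 1 \<in> Delta" for i
    using assms by (intro Delta_power_minus_one is_unit_if_power_eq_one) auto
  txt \<open>\<open>w = 1 - x + x\<^sup>2 - \<dots> + x\<^bsup>2m\<^esup>\<close> is congruent to \<open>1\<close> modulo \<open>\<Delta>\<close>, and \<open>w + 2 z\<close> is the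
    geometric sum, which annihilates \<open>1 - x\<close>.\<close>
  define z where "z = (\<Sum>j<m. x ^ (2 * j + 1))"
  define w where "w = (\<Sum>i<2 * m + 1. x ^ i) - 2 * z"
  have "w - 1 \<in> Delta"
    unfolding w_def z_def
  proof (induction m)
    case 0
    then show ?case by (simp add: Delta_zero)
  next
    case (Suc m)
    have "(\<Sum>i<2 * Suc m + 1. x ^ i) - 2 * (\<Sum>j<Suc m. x ^ (2 * j + 1)) - 1
        = ((\<Sum>i<2 * m + 1. x ^ i) - 2 * (\<Sum>j<m. x ^ (2 * j + 1)) - 1)
          + ((x ^ (2 * m + 2) - 1) - (x ^ (2 * m + 1) - 1))"
      by (simp add: algebra_simps numeral_2_eq_2 mult_2)
    then show ?case using Suc D by (metis Delta_add Delta_diff)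
  qed
  then have "is_unit w" using Delta_add_unit[OF _ is_unit_one] by fastforce
  moreover have "(w + 2 * z) * (1 - x) = 0"
    using sum_powers_mult_one_minus[of x "2 * m + 1"] assms(2) by (simp add: w_def)
  ultimately show ?thesis by (rule numeral_factor_if_annihilated_by_unit_plus_multiple)
qed

lemma one_minus_eq_three_mult_if_involution:
  assumes "(x::'a::ring_1) * x = 1" and "x - 1 \<in> Delta"
  shows "\<exists>q. 1 - x = 3 * q"
proof -
  txt \<open>\<open>1 - 2x = -1 - 2(x - 1)\<close> is a unit, and \<open>(1 - 2x) + 3x = 1 + x\<close> annihilates \<open>1 - x\<close>.\<close>
  have "- ((x - 1) + (x - 1)) \<in> Delta"
    using assms(2) by (intro Delta_uminus Delta_add)
  from Delta_add_unit[OF this is_unit_minus[OF is_unit_one]]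
  have "is_unit (1 - (x + x))" by (simp add: algebra_simps)
  moreover have "(1 - (x + x) + 3 * x) * (1 - x) = 0"
  proof -
    have "(3::'a) = 1 + 1 + 1" by simp
    then have "1 - (x + x) + 3 * x = 1 + x" by (simp only: distrib_right mult_1_left) simp
    then show ?thesis using assms(1) by (simp add: algebra_simps)
  qed
  ultimately show ?thesis by (rule numeral_factor_if_annihilated_by_unit_plus_multiple)
qed

lemma power_eq_one_Delta_two_or_three_mult:
  assumes "(x::'a::ring_1) - 1 \<in> Delta" and "x ^ n = 1" and "0 < n" and "x \<noteq> 1"
  shows "\<exists>m. x ^ m \<noteq> 1 \<and> ((\<exists>q. 1 - x ^ m = 2 * q) \<or> (\<exists>q. 1 - x ^ m = 3 * q))"
proof -
  define N where "N = (LEAST n. 0 < n \<and> x ^ n = 1)"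
  have N: "0 < N" "x ^ N = 1" using LeastI[of "\<lambda>n. 0 < n \<and> x ^ n = 1"] assms(2,3) N_def by auto
  show ?thesis
  proof (cases "odd N")
    case True
    then obtain m where "N = 2 * m + 1" by (rule oddE)
    then have "\<exists>q. 1 - x = 2 * q" using one_minus_eq_two_mult_if_odd_order assms(1) N(2) by blast
    then show ?thesis using assms(4) by (intro exI[of _ 1]) simp
  next
    case False
    then obtain m where m: "N = 2 * m" by (auto elim: evenE)
    then have "x ^ m \<noteq> 1"
      using not_less_Least[of m "\<lambda>n. 0 < n \<and> x ^ n = 1"] N(1) N_def by auto
    moreover have "x ^ m * x ^ m = 1" using N(2) m by (simp add: power_add[symmetric] mult_2)
    moreover have "x ^ m - 1 \<in> Delta"
      using assms(1) N by (intro Delta_power_minus_one is_unit_if_power_eq_one)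
    ultimately show ?thesis using one_minus_eq_three_mult_if_involution by blast
  qed
qed

lemma lookup_single_mult:
  fixes y :: "'g::group_add \<Rightarrow>\<^sub>0 'r::ring_1"
  shows "Poly_Mapping.lookup (Poly_Mapping.single a c * y) (a + x) = c * Poly_Mapping.lookup y x"
proof -
  have "Poly_Mapping.lookup (Poly_Mapping.single a c * y) (a + x)
      = (\<Sum>l. (c * (\<Sum>q. Poly_Mapping.lookup y q when a + x = l + q)) when a = l)"
    by (simp add: lookup_mult lookup_single when_mult)
  also have "\<dots> = c * (\<Sum>q. Poly_Mapping.lookup y q when x = q)"
    by simp
  finally show ?thesis by simp
qed

lemma lookup_mult_single:
  fixes y :: "'g::group_add \<Rightarrow>\<^sub>0 'r::ring_1"
  shows "Poly_Mapping.lookup (y * Poly_Mapping.single a c) (x + a) = Poly_Mapping.lookup y x * c"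
proof -
  have inner: "(\<Sum>q. (c when a = q) when x + a = l + q) = (c when l = x)" for l
  proof -
    have "(\<Sum>q. (c when a = q) when x + a = l + q) = (\<Sum>q. (c when x + a = l + a) when a = q)"
      by (rule Sum_any.cong) (auto simp: when_def)
    then show ?thesis by (auto simp: when_def)
  qed
  have "Poly_Mapping.lookup (y * Poly_Mapping.single a c) (x + a)
      = (\<Sum>l. Poly_Mapping.lookup y l * c when l = x)"
    by (simp only: lookup_mult lookup_single inner mult_when)
  then show ?thesis by simp
qed

lemma lookup_single_one_mult:
  fixes y :: "'g::group_add \<Rightarrow>\<^sub>0 'r::ring_1"
  shows "Poly_Mapping.lookup (Poly_Mapping.single h 1 * y) x = Poly_Mapping.lookup y (- h + x)"
  using lookup_single_mult[of h 1 y "- h + x"] by (simp add: add.assoc[symmetric])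

lemma is_unit_single_zero_iff:
  "is_unit (Poly_Mapping.single (0::'g::group_add) w) \<longleftrightarrow> is_unit (w::'r::ring_1)"
proof
  assume "is_unit (Poly_Mapping.single (0::'g) w)"
  then obtain y where "Poly_Mapping.single (0::'g) w * y = 1" "y * Poly_Mapping.single 0 w = 1"
    unfolding is_unit_def by blast
  then have "w * Poly_Mapping.lookup y 0 = 1" "Poly_Mapping.lookup y 0 * w = 1"
    using lookup_single_mult[of 0 w y 0] lookup_mult_single[of y 0 w 0] by simp_all
  then show "is_unit w" by (rule is_unit_if_left_and_right_inverse)
next
  assume "is_unit w"
  then obtain w' where "w * w' = 1" "w' * w = 1" unfolding is_unit_def by blast
  then have "Poly_Mapping.single (0::'g) w * Poly_Mapping.single 0 w' = 1"
    and "Poly_Mapping.single (0::'g) w' * Poly_Mapping.single 0 w = 1"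
    by (simp_all add: mult_single)
  then show "is_unit (Poly_Mapping.single (0::'g) w)" unfolding is_unit_def by blast
qed

lemma is_unit_single_one: "is_unit (Poly_Mapping.single (g::'g::group_add) (1::'r::ring_1))"
  unfolding is_unit_def by (rule exI[of _ "Poly_Mapping.single (- g) 1"]) (simp add: mult_single)

lemma Delta_if_single_zero_Delta:
  assumes "Poly_Mapping.single (0::'g::group_add) c \<in> (Delta :: ('g \<Rightarrow>\<^sub>0 'r::ring_1) set)"
  shows "c \<in> Delta"
  unfolding Delta_def
proof (intro CollectI allI impI)
  fix w :: 'r
  assume "is_unit w"
  then have "is_unit (Poly_Mapping.single (0::'g) c + Poly_Mapping.single 0 w)"
    using assms by (intro Delta_add_unit) (simp_all add: is_unit_single_zero_iff)
  then show "is_unit (c + w)" by (simp add: single_add[symmetric] is_unit_single_zero_iff)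
qed

lemma numeral_Delta_if_DT_group_ring:
  assumes "DT_ring TYPE('g::group_add \<Rightarrow>\<^sub>0 'r::ring_1)"
    and "is_unit (numeral n * numeral n - 1 :: 'r)"
  shows "(numeral n :: 'r) \<in> Delta"
proof -
  have "Poly_Mapping.single (0::'g) (numeral n * numeral n - 1 :: 'r)
      = Poly_Mapping.single 0 (numeral n) * Poly_Mapping.single 0 (numeral n) - 1"
    by (simp only: mult_single add_0 single_diff single_one)
  also have "\<dots> = numeral n * numeral n - 1"
    by (simp only: single_numeral)
  finally have "is_unit (numeral n * numeral n - 1 :: 'g \<Rightarrow>\<^sub>0 'r)"
    using assms(2) is_unit_single_zero_iff by metis
  then have "(numeral n :: 'g \<Rightarrow>\<^sub>0 'r) \<in> Delta"
    using DT_central_Delta[OF assms(1)] numeral_mult_commute by blast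
  then have "Poly_Mapping.single (0::'g) (numeral n :: 'r) \<in> Delta" by simp
  then show ?thesis by (rule Delta_if_single_zero_Delta)
qed

lemma not_unit_two_three_if_DT_group_ring:
  assumes "DT_ring TYPE('g::group_add \<Rightarrow>\<^sub>0 'r::ring_1)"
    and "(2::'r) \<notin> Delta" and "(3::'r) \<notin> Delta"
  shows "\<not> is_unit (2::'r)" and "\<not> is_unit (3::'r)"
proof
  assume "is_unit (2::'r)"
  then have "is_unit ((2::'r) * (2 * 2))" by (intro is_unit_mult)
  then have "is_unit ((3::'r) * 3 - 1)" by simp
  from numeral_Delta_if_DT_group_ring[OF assms(1) this] show False using assms(3) by simp
next
  show "\<not> is_unit (3::'r)"
  proof
    assume "is_unit (3::'r)"
    then have "is_unit ((2::'r) * 2 - 1)" by simp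
    from numeral_Delta_if_DT_group_ring[OF assms(1) this] show False using assms(2) by simp
  qed
qed

lemma is_unit_numeral_if_one_minus_single_eq_mult:
  fixes k :: "'g::group_add"
  assumes "k \<noteq> 0" and "1 - Poly_Mapping.single k (1::'r::ring_1) = numeral c * q"
  shows "is_unit (numeral c :: 'r)"
proof -
  have "Poly_Mapping.lookup (1 - Poly_Mapping.single k (1::'r)) 0 = 1"
    using assms(1) by (simp add: lookup_minus lookup_single_not_eq)
  moreover have "Poly_Mapping.lookup (numeral c * q) (0::'g) = numeral c * Poly_Mapping.lookup q 0"
    using lookup_single_mult[of 0 "numeral c" q 0] by simp
  ultimately have "numeral c * Poly_Mapping.lookup q 0 = (1::'r)" using assms(2) by simp
  then show ?thesis by (metis numeral_mult_commute is_unit_if_left_and_right_inverse)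
qed

definition int_multiple :: "int \<Rightarrow> 'g::group_add \<Rightarrow> 'g" where
  "int_multiple k h = (if 0 \<le> k then ((+) h ^^ nat k) 0 else ((+) (- h) ^^ nat (- k)) 0)"

lemma int_multiple_zero [simp]: "int_multiple 0 h = 0"
  by (simp add: int_multiple_def)

lemma int_multiple_diff_one: "int_multiple (k - 1) h = - h + int_multiple k h"
proof (cases "0 < k")
  case True
  then have "nat k = Suc (nat (k - 1))" by simp
  then show ?thesis using True by (simp add: int_multiple_def)
next
  case False
  then have "nat (- (k - 1)) = Suc (nat (- k))" by simp
  then show ?thesis using False by (cases "k = 0") (simp_all add: int_multiple_def)
qed

lemma int_multiple_add_one: "int_multiple (k + 1) h = h + int_multiple k h"
  using int_multiple_diff_one[of "k + 1" h] by simp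

lemma int_multiple_of_nat_add:
  "int_multiple (int n + k) h = int_multiple (int n) h + int_multiple k h"
proof (induction n)
  case 0
  then show ?case by simp
next
  case (Suc n)
  have "int_multiple (int (Suc n) + k) h = h + int_multiple (int n + k) h"
    using int_multiple_add_one[of "int n + k" h] by (simp add: algebra_simps)
  also have "\<dots> = (h + int_multiple (int n) h) + int_multiple k h"
    using Suc by (simp add: add.assoc)
  also have "h + int_multiple (int n) h = int_multiple (int (Suc n)) h"
    using int_multiple_add_one[of "int n" h] by (simp add: add.commute)
  finally show ?case .
qed

lemma inj_int_multiple:
  assumes "\<And>n. 0 < n \<Longrightarrow> int_multiple (int n) h \<noteq> 0"
  shows "inj (\<lambda>k. int_multiple k h)"
proof -
  have "int_multiple a h \<noteq> int_multiple b h" if "a < b" for a b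
  proof
    assume eq: "int_multiple a h = int_multiple b h"
    have "int_multiple b h = int_multiple (int (nat (b - a))) h + int_multiple a h"
      using int_multiple_of_nat_add[of "nat (b - a)" a h] that by simp
    then have "int_multiple (int (nat (b - a))) h = 0"
      using eq by (metis add.left_neutral add_right_cancel)
    then show False using assms[of "nat (b - a)"] that by simp
  qed
  then show ?thesis by (metis injI linorder_neqE)
qed

lemma single_one_power:
  "Poly_Mapping.single (h::'g::group_add) (1::'r::ring_1) ^ n = Poly_Mapping.single (int_multiple (int n) h) 1"
proof (induction n)
  case 0
  then show ?case by simp
next
  case (Suc n)
  have "int_multiple (int (Suc n)) h = h + int_multiple (int n) h"
    using int_multiple_add_one[of "int n" h] by (simp add: add.commute)
  then show ?case using Suc by (simp add: mult_single)
qed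

text \<open>A solution would be the coefficient sequence of an inverse of \<open>1 - X + X\<^sup>2\<close> among Laurent
  polynomials; comparing the extreme terms of its support gives the contradiction.\<close>

lemma trinomial_recurrence_no_finite_solution:
  fixes b :: "int \<Rightarrow> 'a::ring_1"
  assumes "(1::'a) \<noteq> 0" and "finite {k. b k \<noteq> 0}"
  shows "\<exists>k. b k - b (k - 1) + b (k - 2) \<noteq> (1 when k = 0)"
proof (rule ccontr)
  assume "\<not> ?thesis"
  then have rec: "b k - b (k - 1) + b (k - 2) = (1 when k = 0)" for k by blast
  define S where "S = {k. b k \<noteq> 0}"
  have fin: "finite S" using assms(2) by (simp add: S_def)
  have "S \<noteq> {}"
  proof
    assume "S = {}"
    then have "b k = 0" for k by (auto simp: S_def)
    then show False using rec[of 0] assms(1) by simp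
  qed
  define M where "M = Max S"
  define N where "N = Min S"
  have "M \<in> S" "N \<in> S" "N \<le> M"
    using fin \<open>S \<noteq> {}\<close> by (simp_all add: M_def N_def)
  have "M + 2 - 1 \<notin> S" "M + 2 \<notin> S" using Max_ge[OF fin] by (fastforce simp: M_def)+
  then have "b M = (1 when M + 2 = 0)" using rec[of "M + 2"] by (simp add: S_def)
  then have "M = - 2" using \<open>M \<in> S\<close> by (auto simp: S_def when_def split: if_splits)
  have "N - 1 \<notin> S" "N - 2 \<notin> S" using Min_le[OF fin] by (fastforce simp: N_def)+
  then have "b N = (1 when N = 0)" using rec[of N] by (simp add: S_def)
  then have "N = 0" using \<open>N \<in> S\<close> by (auto simp: S_def when_def split: if_splits)
  show False using \<open>M = - 2\<close> \<open>N = 0\<close> \<open>N \<le> M\<close> by simp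
qed

lemma not_unit_trinomial_if_infinite_order:
  fixes h :: "'g::group_add"
  assumes "(1::'r::ring_1) \<noteq> 0" and "inj (\<lambda>k. int_multiple k h)"
  shows "\<not> is_unit (1 - Poly_Mapping.single h 1 + Poly_Mapping.single h 1 * Poly_Mapping.single h (1::'r))"
    (is "\<not> is_unit ?T")
proof
  define H where "H = Poly_Mapping.single h (1::'r)"
  assume "is_unit ?T"
  then obtain y where y: "(1 - H + H * H) * y = 1" unfolding is_unit_def H_def by blast
  define b where "b k = Poly_Mapping.lookup y (int_multiple k h)" for k
  have "{k. b k \<noteq> 0} = (\<lambda>k. int_multiple k h) -` Poly_Mapping.keys y"
    by (auto simp: b_def in_keys_iff)
  then have "finite {k. b k \<noteq> 0}" using finite_vimageI[OF finite_keys assms(2)] by simp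
  moreover have "b k - b (k - 1) + b (k - 2) = (1 when k = 0)" for k
  proof -
    have "1 = y - H * y + H * (H * y)" using y by (simp add: algebra_simps)
    then have coeff: "(1 when x = 0) = Poly_Mapping.lookup y x - Poly_Mapping.lookup y (- h + x)
        + Poly_Mapping.lookup y (- h + (- h + x))" for x
      by (metis lookup_add lookup_minus lookup_one lookup_single_one_mult H_def)
    have "int_multiple (k - 2) h = - h + (- h + int_multiple k h)"
      using int_multiple_diff_one[of k h] int_multiple_diff_one[of "k - 1" h] by simp
    then have "b k - b (k - 1) + b (k - 2) = (1 when int_multiple k h = 0)"
      unfolding b_def int_multiple_diff_one coeff by simp
    moreover have "int_multiple k h = 0 \<longleftrightarrow> k = 0"
      using injD[OF assms(2), of k 0] by auto
    ultimately show ?thesis by simp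
  qed
  ultimately show False using trinomial_recurrence_no_finite_solution assms(1) by blast
qed

lemma not_Delta_single_minus_one_if_infinite_order:
  fixes h :: "'g::group_add"
  assumes "(1::'r::ring_1) \<noteq> 0" and "inj (\<lambda>k. int_multiple k h)"
  shows "Poly_Mapping.single h (1::'r) - 1 \<notin> Delta"
proof
  define H where "H = Poly_Mapping.single h (1::'r)"
  assume "H - 1 \<in> Delta"
  then have "is_unit (H * (H - 1) + 1)"
    by (intro Delta_add_unit Delta_unit_mult is_unit_one) (simp_all add: H_def is_unit_single_one)
  moreover have "\<not> is_unit (1 - H + H * H)"
    using not_unit_trinomial_if_infinite_order[OF assms] by (simp add: H_def)
  ultimately show False by (simp add: algebra_simps)
qed

lemma is_unit_two_or_three_if_finite_order:
  fixes h :: "'g::group_add"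
  assumes "Poly_Mapping.single h (1::'r::ring_1) - 1 \<in> Delta" and "h \<noteq> 0" and "(1::'r) \<noteq> 0"
    and "int_multiple (int n) h = 0" and "0 < n"
  shows "is_unit (2::'r) \<or> is_unit (3::'r)"
proof -
  define H where "H = Poly_Mapping.single h (1::'r)"
  have "H ^ n = 1" using assms(4) by (simp add: H_def single_one_power)
  moreover have "H \<noteq> 1"
    using assms(2,3) by (metis H_def lookup_one lookup_single_eq when_simps(2))
  moreover have "H - 1 \<in> Delta" using assms(1) by (simp add: H_def)
  ultimately obtain m where "H ^ m \<noteq> 1"
    and two_or_three: "(\<exists>q. 1 - H ^ m = 2 * q) \<or> (\<exists>q. 1 - H ^ m = 3 * q)"
    using power_eq_one_Delta_two_or_three_mult assms(5) by blast
  define k where "k = int_multiple (int m) h"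
  have Hm: "H ^ m = Poly_Mapping.single k 1" by (simp add: H_def k_def single_one_power)
  with \<open>H ^ m \<noteq> 1\<close> have "k \<noteq> 0" by auto
  then show ?thesis
    using two_or_three is_unit_numeral_if_one_minus_single_eq_mult unfolding Hm by blast
qed

theorem theorem3p9:
  assumes "DT_ring TYPE('g::group_add \<Rightarrow>\<^sub>0 'r::ring_1)"
    and "(2::'r) \<notin> Delta"
    and "(3::'r) \<notin> Delta"
  shows "\<forall>g::'g. g + g = 0"
proof
  fix g :: 'g
  have one_neq_zero: "(1::'r) \<noteq> 0"
  proof
    assume "(1::'r) = 0"
    then have "is_unit (x::'r)" for x unfolding is_unit_def by (metis mult_1 mult_zero_left)
    then show False using assms(2) unfolding Delta_def by blast
  qed
  have not_units: "\<not> is_unit (2::'r)" "\<not> is_unit (3::'r)"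
    using not_unit_two_three_if_DT_group_ring[OF assms] by blast+
  show "g + g = 0"
  proof (rule ccontr)
    assume "g + g \<noteq> 0"
    have H_Delta: "Poly_Mapping.single (g + g) (1::'r) - 1 \<in> Delta"
      using DT_square_minus_one_Delta[OF assms(1) is_unit_single_one[of g]] by (simp add: mult_single)
    show False
    proof (cases "\<exists>n>0. int_multiple (int n) (g + g) = 0")
      case True
      then obtain n where "0 < n" and "int_multiple (int n) (g + g) = 0" by blast
      then have "is_unit (2::'r) \<or> is_unit (3::'r)"
        using is_unit_two_or_three_if_finite_order[OF H_Delta \<open>g + g \<noteq> 0\<close> one_neq_zero] by blast
      then show False using not_units by blast
    next
      case False
      then have "inj (\<lambda>k. int_multiple k (g + g))" by (intro inj_int_multiple) blast
      then show False
        using not_Delta_single_minus_one_if_infinite_order[OF one_neq_zero] H_Delta by blast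
    qed
  qed
qed

end
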